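(* Let $(X,d)$ be a metric space and let $u,u_1,u_2,\ldots\in F_{USCG}(X)$. Then the following statements are equivalent: (i) $H_{\rm end}(u_n,u)\to0$; (ii) $H([u_n]_\alpha,[u]_\alpha)\to0$ for almost every $\alpha\in(0,1)$ (Lebesgue measure); (iii) $H([u_n]_\alpha,[u]_\alpha)\to0$ for all $\alpha\in(0,1)\setminus P(u)$; (iv) there is a dense subset $P$ of $(0,1)\setminus P(u)$ such that $H([u_n]_\alpha,[u]_\alpha)\to0$ for all $\alpha\in P$; (v) there is a countable dense subset $P$ of $(0,1)\setminus P(u)$ such that $H([u_n]_\alpha,[u]_\alpha)\to0$ for all $\alpha\in P$.
   Context: A fuzzy set on $X$ is a function $u:X\to[0,1]$, with $\alpha$-cuts $[u]_\alpha=\{x: u(x)\ge\alpha\}$ for $\alpha\in(0,1]$ and $[u]_0=\overline{\{u>0\}}$. $F_{USC}(X)$ is the set of fuzzy sets with all $\alpha$-cuts ($\alpha\in[0,1]$) non-empty and closed; $F_{USCG}(X)=\{u\in F_{USC}(X): [u]_\alpha\text{ compact for all }\alpha\in(0,1]\}$. For non-empty closed sets $U,V$ in a metric space $(Y,\rho)$, $H(U,V)=\max\{\sup_{a\in U}\inf_{b\in V}\rho(a,b),\sup_{b\in V}\inf_{a\in U}\rho(a,b)\}$. $X\times[0,1]$ is metrized by $\overline{d}((x,\alpha),(y,\beta))=d(x,y)+|\alpha-\beta|$, ${\rm end}\,u=\{(x,t)\in X\times[0,1]: u(x)\ge t\}$, $H_{\rm end}(u,v)=H({\rm end}\,u,{\rm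 end}\,v)$. A number $\alpha\in(0,1)$ is a platform point of $u$ if $\overline{\{u>\alpha\}}\subsetneqq[u]_\alpha$; $P(u)$ is the set of platform points of $u$. *)

theory Defs
  imports "HOL-Analysis.Analysis"
begin

definition fuzzy_set :: "('a \<Rightarrow> real) \<Rightarrow> bool" where
  "fuzzy_set u \<longleftrightarrow> (\<forall>x. 0 \<le> u x \<and> u x \<le> 1)"

definition cut :: "('a::topological_space \<Rightarrow> real) \<Rightarrow> real \<Rightarrow> 'a set" where
  "cut u \<alpha> = (if \<alpha> = 0 then closure {x. u x > 0} else {x. u x \<ge> \<alpha>})"

definition F_USC :: "('a::topological_space \<Rightarrow> real) \<Rightarrow> bool" where
  "F_USC u \<longleftrightarrow> fuzzy_set u \<and> (\<forall>\<alpha>\<in>{0..1}. cut u \<alpha> \<noteq> {} \<and> closed (cut u \<alpha>))"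

definition F_USCG :: "('a::topological_space \<Rightarrow> real) \<Rightarrow> bool" where
  "F_USCG u \<longleftrightarrow> F_USC u \<and> (\<forall>\<alpha>\<in>{0<..1}. compact (cut u \<alpha>))"

text \<open>Hausdorff distance w.r.t. a distance function \<rho>, valued in the extended reals
  (it may be infinite for unbounded sets).\<close>

definition hausdorff :: "('b \<Rightarrow> 'b \<Rightarrow> real) \<Rightarrow> 'b set \<Rightarrow> 'b set \<Rightarrow> ereal" where
  "hausdorff \<rho> U V = max (SUP a\<in>U. INF b\<in>V. ereal (\<rho> a b)) (SUP b\<in>V. INF a\<in>U. ereal (\<rho> a b))"

definition H :: "'a::metric_space set \<Rightarrow> 'a set \<Rightarrow> ereal" where
  "H U V = hausdorff dist U V"

definition dbar :: "('a::metric_space \<times> real) \<Rightarrow> ('a \<times> real) \<Rightarrow> real" where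
  "dbar p q = dist (fst p) (fst q) + \<bar>snd p - snd q\<bar>"

definition endo :: "('a \<Rightarrow> real) \<Rightarrow> ('a \<times> real) set" where
  "endo u = {(x, t). t \<in> {0..1} \<and> u x \<ge> t}"

definition H_end :: "('a::metric_space \<Rightarrow> real) \<Rightarrow> ('a \<Rightarrow> real) \<Rightarrow> ereal" where
  "H_end u v = hausdorff dbar (endo u) (endo v)"

definition platform_points :: "('a::topological_space \<Rightarrow> real) \<Rightarrow> real set" where
  "platform_points u = {\<alpha>\<in>{0<..<1}. closure {x. u x > \<alpha>} \<subset> cut u \<alpha>}"

end

theory Submission
  imports Defs
begin

text \<open>The endograph distance controls the cuts up to a small shift of level. If
  \<open>H_end(u_n, u) \<rightarrow> 0\<close>, a point of \<open>[u_n]_\<alpha>\<close> lies near a point of \<open>u\<close> of level slightly below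
  \<open>\<alpha>\<close>, and by compactness the cuts of \<open>u\<close> slightly below \<open>\<alpha>\<close> lie in any neighbourhood of
  \<open>[u]_\<alpha>\<close>. Conversely, unless \<open>\<alpha>\<close> is a platform point, every point of \<open>[u]_\<alpha>\<close> is a limit
  of points where \<open>u > \<alpha>\<close>, and these are approximated by points of \<open>u_n\<close> of level at least
  \<open>\<alpha>\<close>. If the cuts converge on a set of levels dense in \<open>(0,1)\<close>, a finite net of such levels
  controls all points of both endographs, so \<open>H_end(u_n, u) \<rightarrow> 0\<close>. Finally, every platform
  point is the value of a local maximum, and these maxima are uniformly separated inside the
  compact cuts, so there are only countably many platform points; hence the non-platform
  levels, and the complement of any null set, are dense in \<open>(0,1)\<close>.\<close>

definition within_nbhd :: "('b \<Rightarrow> 'b \<Rightarrow> real) \<Rightarrow> real \<Rightarrow> 'b set \<Rightarrow> 'b set \<Rightarrow> bool" where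
  "within_nbhd \<rho> e U V \<longleftrightarrow> (\<forall>a\<in>U. \<exists>b\<in>V. \<rho> a b < e)"

lemma hausdorff_le:
  assumes "\<And>a. a \<in> U \<Longrightarrow> \<exists>b\<in>V. \<rho> a b \<le> e" and "\<And>b. b \<in> V \<Longrightarrow> \<exists>a\<in>U. \<rho> a b \<le> e"
  shows "hausdorff \<rho> U V \<le> ereal e"
  unfolding hausdorff_def
proof (intro max.boundedI SUP_least)
  show "(INF b\<in>V. ereal (\<rho> a b)) \<le> ereal e" if "a \<in> U" for a
    using assms(1)[OF that] by (meson INF_lower2 ereal_less_eq(3))
  show "(INF a\<in>U. ereal (\<rho> a b)) \<le> ereal e" if "b \<in> V" for b
    using assms(2)[OF that] by (meson INF_lower2 ereal_less_eq(3))
qed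

lemma hausdorff_nonneg:
  assumes "U \<noteq> {}" and "\<And>a b. 0 \<le> \<rho> a b"
  shows "0 \<le> hausdorff \<rho> U V"
proof -
  obtain a where a: "a \<in> U" using assms(1) by blast
  have "0 \<le> (INF b\<in>V. ereal (\<rho> a b))" by (rule INF_greatest) (use assms(2) in auto)
  also have "\<dots> \<le> (SUP a\<in>U. INF b\<in>V. ereal (\<rho> a b))" using a by (rule SUP_upper)
  finally show ?thesis unfolding hausdorff_def by (simp add: le_max_iff_disj)
qed

lemma within_nbhd_if_hausdorff_less:
  assumes "hausdorff \<rho> U V < ereal e" and sym: "\<And>a b. \<rho> a b = \<rho> b a"
  shows "within_nbhd \<rho> e U V" "within_nbhd \<rho> e V U"
proof -
  have "(INF b\<in>V. ereal (\<rho> a b)) < ereal e" if "a \<in> U" for a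
    using that assms(1) unfolding hausdorff_def by (meson SUP_upper max.strict_boundedE order.strict_trans1)
  then show "within_nbhd \<rho> e U V" by (auto simp: within_nbhd_def INF_less_iff)
  have "(INF a\<in>U. ereal (\<rho> a b)) < ereal e" if "b \<in> V" for b
    using that assms(1) unfolding hausdorff_def by (meson SUP_upper max.strict_boundedE order.strict_trans1)
  then show "within_nbhd \<rho> e V U" by (auto simp: within_nbhd_def INF_less_iff sym)
qed

lemma tendsto_hausdorff_0_iff:
  assumes "\<And>n. U n \<noteq> {}" and "\<And>a b. 0 \<le> \<rho> a b" and sym: "\<And>a b. \<rho> a b = \<rho> b a"
  shows "(\<lambda>n. hausdorff \<rho> (U n) V) \<longlonglongrightarrow> 0 \<longleftrightarrow>
    (\<forall>e>0. eventually (\<lambda>n. within_nbhd \<rho> e (U n) V \<and> within_nbhd \<rho> e V (U n)) sequentially)"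
proof safe
  fix e :: real assume "(\<lambda>n. hausdorff \<rho> (U n) V) \<longlonglongrightarrow> 0" "0 < e"
  then have "eventually (\<lambda>n. hausdorff \<rho> (U n) V < ereal e) sequentially"
    by (simp add: order_tendstoD(2))
  then show "eventually (\<lambda>n. within_nbhd \<rho> e (U n) V \<and> within_nbhd \<rho> e V (U n)) sequentially"
    by eventually_elim (use within_nbhd_if_hausdorff_less sym in blast)
next
  assume near: "\<forall>e>0. eventually (\<lambda>n. within_nbhd \<rho> e (U n) V \<and> within_nbhd \<rho> e V (U n)) sequentially"
  show "(\<lambda>n. hausdorff \<rho> (U n) V) \<longlonglongrightarrow> 0"
  proof (rule order_tendstoI)
    fix c :: ereal assume "c < 0"
    then show "eventually (\<lambda>n. c < hausdorff \<rho> (U n) V) sequentially"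
      using hausdorff_nonneg[OF assms(1,2)] by (simp add: order.strict_trans2)
  next
    fix c :: ereal assume "0 < c"
    then obtain z where z: "0 < ereal z" "ereal z < c" using ereal_dense2 by blast
    from near z(1) have "eventually (\<lambda>n. within_nbhd \<rho> z (U n) V \<and> within_nbhd \<rho> z V (U n)) sequentially"
      by simp
    then show "eventually (\<lambda>n. hausdorff \<rho> (U n) V < c) sequentially"
    proof eventually_elim
      case (elim n)
      then have "hausdorff \<rho> (U n) V \<le> ereal z"
        unfolding within_nbhd_def by (intro hausdorff_le) (metis less_imp_le sym)+
      then show ?case using z(2) by simp
    qed
  qed
qed

lemma cut_eq_superlevel: "\<alpha> \<noteq> 0 \<Longrightarrow> cut u \<alpha> = {x. \<alpha> \<le> u x}"
  by (simp add: cut_def)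

lemma F_USCG_cut:
  assumes "F_USCG u" "0 < \<alpha>" "\<alpha> \<le> 1"
  shows "compact (cut u \<alpha>)" "cut u \<alpha> \<noteq> {}"
  using assms unfolding F_USCG_def F_USC_def by auto

lemma F_USCG_nonneg: "F_USCG u \<Longrightarrow> 0 \<le> u x"
  unfolding F_USCG_def F_USC_def fuzzy_set_def by auto

lemma F_USCG_le_one: "F_USCG u \<Longrightarrow> u x \<le> 1"
  unfolding F_USCG_def F_USC_def fuzzy_set_def by auto

lemma mem_endo [simp]: "(x, t) \<in> endo u \<longleftrightarrow> 0 \<le> t \<and> t \<le> 1 \<and> t \<le> u x"
  by (simp add: endo_def)

lemma dbar_Pair [simp]: "dbar (x, s) (y, t) = dist x y + \<bar>s - t\<bar>"
  by (simp add: dbar_def)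

lemma dbar_nonneg: "0 \<le> dbar p q"
  by (simp add: dbar_def)

lemma dbar_commute: "dbar p q = dbar q p"
  by (simp add: dbar_def dist_commute abs_minus_commute)

lemma endo_nonempty: "F_USCG u \<Longrightarrow> endo u \<noteq> {}"
proof -
  assume "F_USCG u"
  then have "(x, 0) \<in> endo u" for x by (simp add: F_USCG_nonneg)
  then show ?thesis by blast
qed

lemma closure_superlevel_eq_cut:
  fixes u :: "'a::metric_space \<Rightarrow> real"
  assumes "F_USCG u" "\<alpha> \<in> {0<..<1} - platform_points u"
  shows "closure {x. \<alpha> < u x} = cut u \<alpha>"
proof -
  from assms(2) have "0 < \<alpha>" "\<alpha> \<le> 1" by auto
  then have "closed (cut u \<alpha>)" by (intro compact_imp_closed F_USCG_cut(1)[OF assms(1)])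
  moreover have "{x. \<alpha> < u x} \<subseteq> cut u \<alpha>"
    using \<open>0 < \<alpha>\<close> by (auto simp: cut_eq_superlevel)
  ultimately have "closure {x. \<alpha> < u x} \<subseteq> cut u \<alpha>"
    by (rule closure_minimal[rotated])
  moreover have "\<not> closure {x. \<alpha> < u x} \<subset> cut u \<alpha>"
    using assms(2) unfolding platform_points_def by blast
  ultimately show ?thesis by blast
qed

lemma platform_point_local_max:
  fixes u :: "'a::metric_space \<Rightarrow> real"
  assumes "\<alpha> \<in> platform_points u"
  obtains x r where "0 < r" "u x = \<alpha>" "\<And>y. dist x y < r \<Longrightarrow> u y \<le> \<alpha>"
proof -
  from assms have "0 < \<alpha>" and "closure {x. \<alpha> < u x} \<subset> cut u \<alpha>"
    by (simp_all add: platform_points_def)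
  then obtain x where x: "x \<in> cut u \<alpha>" "x \<notin> closure {x. \<alpha> < u x}"
    by (meson psubset_imp_ex_mem DiffE)
  have "\<alpha> \<le> u x" using x(1) \<open>0 < \<alpha>\<close> by (simp add: cut_eq_superlevel)
  moreover have "\<not> \<alpha> < u x" using x(2) by (meson closure_subset mem_Collect_eq subsetD)
  ultimately have "u x = \<alpha>" by linarith
  from x(2) obtain r where "0 < r" and far: "\<forall>y\<in>{x. \<alpha> < u x}. \<not> dist y x < r"
    unfolding closure_approachable by blast
  have "u y \<le> \<alpha>" if "dist x y < r" for y
  proof (rule ccontr)
    assume "\<not> u y \<le> \<alpha>"
    then have "\<not> dist y x < r" using far by simp
    then show False using that by (simp add: dist_commute)
  qed
  with \<open>0 < r\<close> \<open>u x = \<alpha>\<close> show thesis by (rule that)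
qed

lemma finite_if_uniform_discrete_subset_compact:
  fixes A :: "'a::metric_space set"
  assumes "uniform_discrete A" "A \<subseteq> K" "compact K"
  shows "finite A"
  by (metis assms compact_Int_closed discrete_compact_finite_iff inf.absorb_iff2
      uniform_discrete_imp_closed uniform_discrete_imp_discrete)

text \<open>Points witnessing platform levels above \<open>1/(m+1)\<close> with radius at least \<open>1/(m+1)\<close> are
  \<open>1/(m+1)\<close>-separated in the compact cut at level \<open>1/(m+1)\<close>, so there are finitely many.\<close>

lemma countable_platform_points:
  fixes u :: "'a::metric_space \<Rightarrow> real"
  assumes "F_USCG u"
  shows "countable (platform_points u)"
proof -
  have "\<forall>\<alpha>\<in>platform_points u. \<exists>x r. 0 < r \<and> u x = \<alpha> \<and> (\<forall>y. dist x y < r \<longrightarrow> u y \<le> \<alpha>)"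
  proof
    fix \<alpha> assume "\<alpha> \<in> platform_points u"
    then obtain x r where "0 < r" "u x = \<alpha>" "\<And>y. dist x y < r \<Longrightarrow> u y \<le> \<alpha>"
      by (rule platform_point_local_max) blast
    then show "\<exists>x r. 0 < r \<and> u x = \<alpha> \<and> (\<forall>y. dist x y < r \<longrightarrow> u y \<le> \<alpha>)" by blast
  qed
  then obtain x r where xr: "\<And>\<alpha>. \<alpha> \<in> platform_points u \<Longrightarrow>
      0 < r \<alpha> \<and> u (x \<alpha>) = \<alpha> \<and> (\<forall>y. dist (x \<alpha>) y < r \<alpha> \<longrightarrow> u y \<le> \<alpha>)"
    by metis
  define C where "C m = {\<alpha>\<in>platform_points u. 1 / Suc m < \<alpha> \<and> 1 / Suc m \<le> r \<alpha>}" for m :: nat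
  have cover: "platform_points u \<subseteq> (\<Union>m. C m)"
  proof
    fix \<alpha> assume \<alpha>: "\<alpha> \<in> platform_points u"
    then have "0 < min \<alpha> (r \<alpha>)" using xr by (auto simp: platform_points_def)
    then obtain m :: nat where "1 / Suc m < min \<alpha> (r \<alpha>)" using nat_approx_posE by blast
    then show "\<alpha> \<in> (\<Union>m. C m)" using \<alpha> by (auto simp: C_def)
  qed
  have fin: "finite (C m)" for m
  proof -
    have inj: "inj_on x (C m)" using xr by (metis (no_types, lifting) C_def inj_onI mem_Collect_eq)
    have "uniform_discrete (x ` C m)"
      unfolding uniform_discrete_def
    proof (intro exI[of _ "1 / Suc m"] conjI ballI impI)
      fix a b assume "a \<in> x ` C m" "b \<in> x ` C m" "dist a b < 1 / Suc m"
      then obtain \<alpha> \<beta> where "\<alpha> \<in> C m" "\<beta> \<in> C m" "a = x \<alpha>" "b = x \<beta>" "dist a b < 1 / Suc m"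
        by blast
      then show "a = b" using xr unfolding C_def by (smt (verit, best) dist_commute mem_Collect_eq)
    qed simp
    moreover have "x ` C m \<subseteq> cut u (1 / Suc m)"
      using xr by (auto simp: C_def cut_eq_superlevel)
    moreover have "compact (cut u (1 / Suc m))"
      by (rule F_USCG_cut(1)[OF assms]) simp_all
    ultimately have "finite (x ` C m)" by (rule finite_if_uniform_discrete_subset_compact)
    then show ?thesis using inj finite_image_iff by blast
  qed
  show ?thesis
    by (rule countable_subset[OF cover]) (simp add: countable_finite fin)
qed

text \<open>The open sets \<open>G \<union> - [u]_\<beta>\<close>, \<open>\<beta> < \<alpha>\<close>, increase with \<open>\<beta>\<close> and cover the compact cut
  \<open>[u]_(\<alpha>/2)\<close>, so a single one of them already does.\<close>

lemma cut_subset_open_below: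
  fixes u :: "'a::metric_space \<Rightarrow> real"
  assumes u: "F_USCG u" and \<alpha>: "0 < \<alpha>" "\<alpha> \<le> 1" and G: "open G" "cut u \<alpha> \<subseteq> G"
  obtains \<beta> where "0 < \<beta>" "\<beta> < \<alpha>" "cut u \<beta> \<subseteq> G"
proof -
  define K where "K = cut u (\<alpha> / 2)"
  have K: "compact K" "K \<noteq> {}" using \<alpha> by (simp_all add: K_def F_USCG_cut[OF u])
  have opn: "open (G \<union> - cut u \<beta>)" if "\<beta> \<in> {\<alpha>/2..<\<alpha>}" for \<beta>
  proof -
    from that \<alpha> have "0 < \<beta>" "\<beta> \<le> 1" by auto
    then have "closed (cut u \<beta>)" by (intro compact_imp_closed F_USCG_cut(1)[OF u])
    then show ?thesis using G(1) by (simp add: open_Un open_Compl)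
  qed
  have cover: "K \<subseteq> (\<Union>\<beta>\<in>{\<alpha>/2..<\<alpha>}. G \<union> - cut u \<beta>)"
  proof
    fix y assume "y \<in> K"
    show "y \<in> (\<Union>\<beta>\<in>{\<alpha>/2..<\<alpha>}. G \<union> - cut u \<beta>)"
    proof (cases "\<alpha> \<le> u y")
      case True
      then have "y \<in> G" using G(2) \<alpha> by (auto simp: cut_eq_superlevel)
      then show ?thesis using \<alpha> by (intro UN_I[of "\<alpha> / 2"]) simp_all
    next
      case False
      then have "(u y + \<alpha>) / 2 \<in> {\<alpha>/2..<\<alpha>}" "y \<notin> cut u ((u y + \<alpha>) / 2)"
        using \<open>y \<in> K\<close> \<alpha> by (auto simp: K_def cut_eq_superlevel)
      then show ?thesis by (intro UN_I[of "(u y + \<alpha>) / 2"]) simp_all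
    qed
  qed
  obtain B where B: "B \<subseteq> {\<alpha>/2..<\<alpha>}" "finite B" "K \<subseteq> (\<Union>\<beta>\<in>B. G \<union> - cut u \<beta>)"
    by (rule compactE_image[OF K(1) opn cover])
  then have "B \<noteq> {}" using K(2) by auto
  define \<beta> where "\<beta> = Max B"
  have \<beta>: "\<beta> \<in> {\<alpha>/2..<\<alpha>}" using Max_in[OF B(2) \<open>B \<noteq> {}\<close>] B(1) unfolding \<beta>_def by blast
  have "cut u \<beta> \<subseteq> G"
  proof
    fix y assume "y \<in> cut u \<beta>"
    moreover have "cut u \<beta> \<subseteq> K" using \<beta> \<alpha> by (auto simp: K_def cut_eq_superlevel)
    ultimately obtain \<gamma> where \<gamma>: "\<gamma> \<in> B" "y \<in> G \<union> - cut u \<gamma>" using B(3) by blast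
    have "0 < \<gamma>" "\<gamma> \<le> \<beta>" using \<gamma>(1) B(1) \<alpha> Max_ge[OF B(2)] unfolding \<beta>_def by auto
    then have "y \<in> cut u \<gamma>" using \<open>y \<in> cut u \<beta>\<close> \<beta> \<alpha> by (auto simp: cut_eq_superlevel)
    then show "y \<in> G" using \<gamma>(2) by blast
  qed
  then show thesis using \<beta> \<alpha> by (intro that) auto
qed

lemma tendsto_H_end_0_iff:
  assumes "\<And>n. F_USCG (us n)"
  shows "(\<lambda>n. H_end (us n) u) \<longlonglongrightarrow> 0 \<longleftrightarrow>
    (\<forall>e>0. eventually (\<lambda>n. within_nbhd dbar e (endo (us n)) (endo u)
                           \<and> within_nbhd dbar e (endo u) (endo (us n))) sequentially)"
  unfolding H_end_def using endo_nonempty[OF assms]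
  by (rule tendsto_hausdorff_0_iff) (simp_all add: dbar_nonneg dbar_commute)

lemma tendsto_H_cut_0_iff:
  fixes u :: "'a::metric_space \<Rightarrow> real"
  assumes "\<And>n. F_USCG (us n)" "0 < \<alpha>" "\<alpha> \<le> 1"
  shows "(\<lambda>n. H (cut (us n) \<alpha>) (cut u \<alpha>)) \<longlonglongrightarrow> 0 \<longleftrightarrow>
    (\<forall>e>0. eventually (\<lambda>n. within_nbhd dist e (cut (us n) \<alpha>) (cut u \<alpha>)
                           \<and> within_nbhd dist e (cut u \<alpha>) (cut (us n) \<alpha>)) sequentially)"
  unfolding H_def using F_USCG_cut(2)[OF assms]
  by (rule tendsto_hausdorff_0_iff) (simp_all add: dist_commute)

lemma eventually_cut_within_nbhd_limit_cut:
  fixes u :: "'a::metric_space \<Rightarrow> real"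
  assumes u: "F_USCG u" and us: "\<And>n. F_USCG (us n)" and conv: "(\<lambda>n. H_end (us n) u) \<longlonglongrightarrow> 0"
    and \<alpha>: "0 < \<alpha>" "\<alpha> \<le> 1" and "0 < e"
  shows "eventually (\<lambda>n. within_nbhd dist e (cut (us n) \<alpha>) (cut u \<alpha>)) sequentially"
proof -
  define G where "G = (\<Union>c\<in>cut u \<alpha>. ball c (e/2))"
  have "open G" by (simp add: G_def open_UN)
  moreover have "cut u \<alpha> \<subseteq> G"
  proof
    fix x assume "x \<in> cut u \<alpha>"
    then show "x \<in> G" unfolding G_def using \<open>0 < e\<close> by (intro UN_I[of x]) simp_all
  qed
  ultimately obtain \<beta> where \<beta>: "0 < \<beta>" "\<beta> < \<alpha>" "cut u \<beta> \<subseteq> G"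
    by (rule cut_subset_open_below[OF u \<alpha>])
  define \<delta> where "\<delta> = min (\<alpha> - \<beta>) (e/2)"
  have "0 < \<delta>" using \<beta> \<open>0 < e\<close> by (simp add: \<delta>_def)
  with conv have "eventually (\<lambda>n. within_nbhd dbar \<delta> (endo (us n)) (endo u)) sequentially"
    unfolding tendsto_H_end_0_iff[OF us] by (auto elim: eventually_mono)
  then show ?thesis
  proof eventually_elim
    case (elim n)
    show ?case unfolding within_nbhd_def
    proof
      fix a assume "a \<in> cut (us n) \<alpha>"
      then have "(a, \<alpha>) \<in> endo (us n)" using \<alpha> by (simp add: cut_eq_superlevel)
      then obtain q where q: "q \<in> endo u" "dbar (a, \<alpha>) q < \<delta>"
        using elim unfolding within_nbhd_def by blast
      obtain b s where "q = (b, s)" by fastforce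
      with q have "s \<le> u b" "dist a b + \<bar>\<alpha> - s\<bar> < \<delta>" by simp_all
      moreover have "\<delta> \<le> \<alpha> - \<beta>" "\<delta> \<le> e/2"
        unfolding \<delta>_def by (rule min.cobounded1 min.cobounded2)+
      moreover have "\<alpha> - s \<le> \<bar>\<alpha> - s\<bar>" "0 \<le> dist a b" by simp_all
      ultimately have "\<beta> \<le> u b" "dist a b < e/2" by linarith+
      then have "b \<in> G" using \<beta> by (auto simp: cut_eq_superlevel)
      then obtain c where c: "c \<in> cut u \<alpha>" "dist c b < e/2" by (auto simp: G_def)
      have "dist a c \<le> dist a b + dist c b" by (simp add: dist_triangle2)
      also have "\<dots> < e" using \<open>dist a b < e/2\<close> c(2) by simp
      finally show "\<exists>c\<in>cut u \<alpha>. dist a c < e" using c(1) by blast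
    qed
  qed
qed

lemma eventually_limit_cut_within_nbhd_cut:
  fixes u :: "'a::metric_space \<Rightarrow> real"
  assumes u: "F_USCG u" and us: "\<And>n. F_USCG (us n)" and conv: "(\<lambda>n. H_end (us n) u) \<longlonglongrightarrow> 0"
    and \<alpha>: "\<alpha> \<in> {0<..<1} - platform_points u" and "0 < e"
  shows "eventually (\<lambda>n. within_nbhd dist e (cut u \<alpha>) (cut (us n) \<alpha>)) sequentially"
proof -
  have \<alpha>01: "0 < \<alpha>" "\<alpha> \<le> 1" using \<alpha> by auto
  have cover: "cut u \<alpha> \<subseteq> (\<Union>z\<in>{x. \<alpha> < u x}. ball z (e/2))"
  proof
    fix c assume "c \<in> cut u \<alpha>"
    then have "c \<in> closure {x. \<alpha> < u x}" using closure_superlevel_eq_cut[OF u \<alpha>] by simp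
    then obtain z where "z \<in> {x. \<alpha> < u x}" "dist c z < e/2"
      using closure_approachableD \<open>0 < e\<close> half_gt_zero by blast
    then show "c \<in> (\<Union>z\<in>{x. \<alpha> < u x}. ball z (e/2))" by (intro UN_I[of z]) (simp_all add: dist_commute)
  qed
  obtain Z where Z: "Z \<subseteq> {x. \<alpha> < u x}" "finite Z" "cut u \<alpha> \<subseteq> (\<Union>z\<in>Z. ball z (e/2))"
    by (rule compactE_image[OF F_USCG_cut(1)[OF u \<alpha>01] _ cover]) simp
  have "eventually (\<lambda>n. \<exists>a\<in>cut (us n) \<alpha>. dist z a < e/2) sequentially" if "z \<in> Z" for z
  proof -
    have "\<alpha> < u z" using that Z(1) by blast
    then have "(z, u z) \<in> endo u" using \<alpha>01 F_USCG_le_one[OF u] by simp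
    define \<delta> where "\<delta> = min (e/2) (u z - \<alpha>)"
    have "0 < \<delta>" using \<open>\<alpha> < u z\<close> \<open>0 < e\<close> by (simp add: \<delta>_def)
    with conv have "eventually (\<lambda>n. within_nbhd dbar \<delta> (endo u) (endo (us n))) sequentially"
      unfolding tendsto_H_end_0_iff[OF us] by (auto elim: eventually_mono)
    then show ?thesis
    proof eventually_elim
      case (elim n)
      then obtain p where p: "p \<in> endo (us n)" "dbar (z, u z) p < \<delta>"
        using \<open>(z, u z) \<in> endo u\<close> unfolding within_nbhd_def by blast
      obtain a t where "p = (a, t)" by fastforce
      with p have "t \<le> us n a" "dist z a + \<bar>u z - t\<bar> < \<delta>" by simp_all
      moreover have "\<delta> \<le> e/2" "\<delta> \<le> u z - \<alpha>"
        unfolding \<delta>_def by (rule min.cobounded1 min.cobounded2)+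
      moreover have "u z - t \<le> \<bar>u z - t\<bar>" "0 \<le> dist z a" by simp_all
      ultimately have "\<alpha> \<le> us n a" "dist z a < e/2" by linarith+
      then show ?case using \<alpha>01 by (auto simp: cut_eq_superlevel)
    qed
  qed
  then have "eventually (\<lambda>n. \<forall>z\<in>Z. \<exists>a\<in>cut (us n) \<alpha>. dist z a < e/2) sequentially"
    using Z(2) by (simp add: eventually_ball_finite)
  then show ?thesis
  proof eventually_elim
    case (elim n)
    show ?case unfolding within_nbhd_def
    proof
      fix b assume "b \<in> cut u \<alpha>"
      then obtain z where z: "z \<in> Z" "dist z b < e/2" using Z(3) by auto
      then obtain a where a: "a \<in> cut (us n) \<alpha>" "dist z a < e/2" using elim by blast
      have "dist b a \<le> dist z b + dist z a" by (rule dist_triangle3)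
      also have "\<dots> < e" using z(2) a(2) by simp
      finally show "\<exists>a\<in>cut (us n) \<alpha>. dist b a < e" using a(1) by blast
    qed
  qed
qed

lemma tendsto_H_cut_if_tendsto_H_end:
  fixes u :: "'a::metric_space \<Rightarrow> real"
  assumes u: "F_USCG u" and us: "\<And>n. F_USCG (us n)" and conv: "(\<lambda>n. H_end (us n) u) \<longlonglongrightarrow> 0"
    and \<alpha>: "\<alpha> \<in> {0<..<1} - platform_points u"
  shows "(\<lambda>n. H (cut (us n) \<alpha>) (cut u \<alpha>)) \<longlonglongrightarrow> 0"
proof -
  have \<alpha>01: "0 < \<alpha>" "\<alpha> \<le> 1" using \<alpha> by auto
  show ?thesis
    unfolding tendsto_H_cut_0_iff[OF us \<alpha>01]
    using eventually_cut_within_nbhd_limit_cut[OF u us conv \<alpha>01]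
      eventually_limit_cut_within_nbhd_cut[OF u us conv \<alpha>]
    by (simp add: eventually_conj)
qed

lemma finite_level_net:
  fixes Q :: "real set"
  assumes dense: "{0<..<1} \<subseteq> closure Q" and "0 < e"
  obtains G where "finite G" "G \<subseteq> Q" "\<And>t. e \<le> t \<Longrightarrow> t \<le> 1 \<Longrightarrow> \<exists>\<alpha>\<in>G. \<alpha> < t \<and> t < \<alpha> + e"
proof -
  have cover: "{e..1} \<subseteq> (\<Union>q\<in>Q. {q<..<q + e})"
  proof
    fix t :: real assume "t \<in> {e..1}"
    then have "t - e/2 \<in> closure Q" using \<open>0 < e\<close> by (intro subsetD[OF dense]) auto
    then obtain q where "q \<in> Q" "dist (t - e/2) q < e/2"
      using closure_approachableD \<open>0 < e\<close> half_gt_zero by blast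
    moreover from \<open>dist (t - e/2) q < e/2\<close> have "q < t" "t < q + e"
      unfolding dist_real_def abs_less_iff by linarith+
    ultimately show "t \<in> (\<Union>q\<in>Q. {q<..<q + e})" by (intro UN_I[of q]) simp_all
  qed
  obtain G where G: "G \<subseteq> Q" "finite G" "{e..1} \<subseteq> (\<Union>q\<in>G. {q<..<q + e})"
    by (rule compactE_image[OF compact_Icc _ cover]) simp
  show thesis
  proof (rule that[OF G(2,1)])
    fix t assume "e \<le> t" "t \<le> 1"
    then obtain q where "q \<in> G" "t \<in> {q<..<q + e}" using G(3) by fastforce
    then show "\<exists>\<alpha>\<in>G. \<alpha> < t \<and> t < \<alpha> + e" by auto
  qed
qed

lemma endo_within_nbhd_if_cuts_within_nbhd:
  fixes v w :: "'a::metric_space \<Rightarrow> real"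
  assumes w: "\<And>x. 0 \<le> w x"
    and G: "G \<subseteq> {0<..<1}" "\<And>t. e \<le> t \<Longrightarrow> t \<le> 1 \<Longrightarrow> \<exists>\<alpha>\<in>G. \<alpha> < t \<and> t < \<alpha> + e"
    and cuts: "\<And>\<alpha>. \<alpha> \<in> G \<Longrightarrow> within_nbhd dist e (cut v \<alpha>) (cut w \<alpha>)"
  shows "within_nbhd dbar (2 * e) (endo v) (endo w)"
  unfolding within_nbhd_def
proof
  fix p assume "p \<in> endo v"
  then obtain x t where p: "p = (x, t)" "0 \<le> t" "t \<le> 1" "t \<le> v x" by (cases p) auto
  show "\<exists>q\<in>endo w. dbar p q < 2 * e"
  proof (cases "t < e")
    case True
    then have "(x, 0) \<in> endo w" "dbar p (x, 0) < 2 * e" using w p by auto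
    then show ?thesis by blast
  next
    case False
    then obtain \<alpha> where \<alpha>: "\<alpha> \<in> G" "\<alpha> < t" "t < \<alpha> + e" using G(2) p(3) by (meson not_less)
    have "0 < \<alpha>" "\<alpha> < 1" using \<alpha>(1) G(1) by auto
    then have "x \<in> cut v \<alpha>" using \<alpha> p by (simp add: cut_eq_superlevel)
    then obtain b where b: "b \<in> cut w \<alpha>" "dist x b < e"
      using cuts[OF \<alpha>(1)] unfolding within_nbhd_def by blast
    then have "(b, \<alpha>) \<in> endo w" "dbar p (b, \<alpha>) < 2 * e"
      using \<open>0 < \<alpha>\<close> \<open>\<alpha> < 1\<close> \<alpha> p by (auto simp: cut_eq_superlevel)
    then show ?thesis by blast
  qed
qed

lemma tendsto_H_end_if_dense_tendsto_H_cut: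
  fixes u :: "'a::metric_space \<Rightarrow> real"
  assumes u: "F_USCG u" and us: "\<And>n. F_USCG (us n)"
    and Q: "Q \<subseteq> {0<..<1}" "{0<..<1} \<subseteq> closure Q"
    and conv: "\<And>\<alpha>. \<alpha> \<in> Q \<Longrightarrow> (\<lambda>n. H (cut (us n) \<alpha>) (cut u \<alpha>)) \<longlonglongrightarrow> 0"
  shows "(\<lambda>n. H_end (us n) u) \<longlonglongrightarrow> 0"
  unfolding tendsto_H_end_0_iff[OF us]
proof (intro allI impI)
  fix e :: real assume "0 < e"
  then have "0 < e/2" by simp
  then obtain G where G: "finite G" "G \<subseteq> Q" "\<And>t. e/2 \<le> t \<Longrightarrow> t \<le> 1 \<Longrightarrow> \<exists>\<alpha>\<in>G. \<alpha> < t \<and> t < \<alpha> + e/2"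
    by (rule finite_level_net[OF Q(2)]) blast
  have G01: "G \<subseteq> {0<..<1}" using G(2) Q(1) by blast
  have "\<forall>\<alpha>\<in>G. eventually (\<lambda>n. within_nbhd dist (e/2) (cut (us n) \<alpha>) (cut u \<alpha>)
                             \<and> within_nbhd dist (e/2) (cut u \<alpha>) (cut (us n) \<alpha>)) sequentially"
  proof
    fix \<alpha> assume "\<alpha> \<in> G"
    then have \<alpha>: "\<alpha> \<in> Q" "0 < \<alpha>" "\<alpha> \<le> 1" using G(2) G01 by auto
    have "\<forall>\<epsilon>>0. eventually (\<lambda>n. within_nbhd dist \<epsilon> (cut (us n) \<alpha>) (cut u \<alpha>)
                             \<and> within_nbhd dist \<epsilon> (cut u \<alpha>) (cut (us n) \<alpha>)) sequentially"
      using conv[OF \<alpha>(1)] unfolding tendsto_H_cut_0_iff[OF us \<alpha>(2,3)] .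
    then show "eventually (\<lambda>n. within_nbhd dist (e/2) (cut (us n) \<alpha>) (cut u \<alpha>)
                             \<and> within_nbhd dist (e/2) (cut u \<alpha>) (cut (us n) \<alpha>)) sequentially"
      using \<open>0 < e/2\<close> by blast
  qed
  then have "eventually (\<lambda>n. \<forall>\<alpha>\<in>G. within_nbhd dist (e/2) (cut (us n) \<alpha>) (cut u \<alpha>)
                             \<and> within_nbhd dist (e/2) (cut u \<alpha>) (cut (us n) \<alpha>)) sequentially"
    by (rule eventually_ball_finite[OF G(1)])
  then show "eventually (\<lambda>n. within_nbhd dbar e (endo (us n)) (endo u)
                           \<and> within_nbhd dbar e (endo u) (endo (us n))) sequentially"
  proof eventually_elim
    case (elim n)
    then have down: "\<And>\<alpha>. \<alpha> \<in> G \<Longrightarrow> within_nbhd dist (e/2) (cut (us n) \<alpha>) (cut u \<alpha>)"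
      and up: "\<And>\<alpha>. \<alpha> \<in> G \<Longrightarrow> within_nbhd dist (e/2) (cut u \<alpha>) (cut (us n) \<alpha>)"
      by simp_all
    have "within_nbhd dbar (2 * (e/2)) (endo (us n)) (endo u)"
      by (rule endo_within_nbhd_if_cuts_within_nbhd[OF F_USCG_nonneg[OF u] G01 G(3) down])
    moreover have "within_nbhd dbar (2 * (e/2)) (endo u) (endo (us n))"
      by (rule endo_within_nbhd_if_cuts_within_nbhd[OF F_USCG_nonneg[OF us] G01 G(3) up])
    ultimately show ?case by simp
  qed
qed

lemma open_subset_closure_diff_null_set:
  fixes A :: "'a::euclidean_space set"
  assumes "open A" "N \<in> null_sets lborel"
  shows "A \<subseteq> closure (A - N)"
proof
  fix x assume "x \<in> A"
  have "negligible N" using assms(2) by (simp add: negligible_iff_null_sets null_sets_completionI)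
  show "x \<in> closure (A - N)"
    unfolding closure_approachable
  proof (intro allI impI)
    fix \<epsilon> :: real assume "0 < \<epsilon>"
    then have "\<not> negligible (A \<inter> ball x \<epsilon>)"
      using \<open>x \<in> A\<close> assms(1) by (intro open_not_negligible) auto
    then have "\<not> A \<inter> ball x \<epsilon> \<subseteq> N" using \<open>negligible N\<close> negligible_subset by blast
    then show "\<exists>y\<in>A - N. dist y x < \<epsilon>" by (auto simp: dist_commute)
  qed
qed

lemma tendsto_H_end_if_dense_nonplatform_tendsto_H_cut:
  fixes u :: "'a::metric_space \<Rightarrow> real"
  assumes u: "F_USCG u" and us: "\<And>n. F_USCG (us n)"
    and P: "P \<subseteq> {0<..<1} - platform_points u" "{0<..<1} - platform_points u \<subseteq> closure P"
    and conv: "\<And>\<alpha>. \<alpha> \<in> P \<Longrightarrow> (\<lambda>n. H (cut (us n) \<alpha>) (cut u \<alpha>)) \<longlonglongrightarrow> 0"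
  shows "(\<lambda>n. H_end (us n) u) \<longlonglongrightarrow> 0"
proof (rule tendsto_H_end_if_dense_tendsto_H_cut[OF u us _ _ conv])
  have "{0<..<1} \<subseteq> closure ({0<..<1} - platform_points u)"
    using countable_imp_null_set_lborel[OF countable_platform_points[OF u]]
    by (rule open_subset_closure_diff_null_set[OF open_greaterThanLessThan])
  also have "\<dots> \<subseteq> closure P" using closure_mono[OF P(2)] by simp
  finally show "{0<..<1} \<subseteq> closure P" .
qed (use P(1) in auto)

lemma tendsto_H_end_iff_AE_tendsto_H_cut:
  fixes u :: "'a::metric_space \<Rightarrow> real"
  assumes u: "F_USCG u" and us: "\<And>n. F_USCG (us n)"
  shows "(\<lambda>n. H_end (us n) u) \<longlonglongrightarrow> 0 \<longleftrightarrow>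
    (AE \<alpha> in lborel. \<alpha> \<in> {0<..<1} \<longrightarrow> (\<lambda>n. H (cut (us n) \<alpha>) (cut u \<alpha>)) \<longlonglongrightarrow> 0)"
proof
  assume conv: "(\<lambda>n. H_end (us n) u) \<longlonglongrightarrow> 0"
  show "AE \<alpha> in lborel. \<alpha> \<in> {0<..<1} \<longrightarrow> (\<lambda>n. H (cut (us n) \<alpha>) (cut u \<alpha>)) \<longlonglongrightarrow> 0"
    using AE_not_in[OF countable_imp_null_set_lborel[OF countable_platform_points[OF u]]]
    by eventually_elim (simp add: tendsto_H_cut_if_tendsto_H_end[OF u us conv])
next
  assume "AE \<alpha> in lborel. \<alpha> \<in> {0<..<1} \<longrightarrow> (\<lambda>n. H (cut (us n) \<alpha>) (cut u \<alpha>)) \<longlonglongrightarrow> 0"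
  then obtain N where bad: "{\<alpha>\<in>space lborel. \<not> (\<alpha> \<in> {0<..<1} \<longrightarrow>
      (\<lambda>n. H (cut (us n) \<alpha>) (cut u \<alpha>)) \<longlonglongrightarrow> 0)} \<subseteq> N"
    and "emeasure lborel N = 0" "N \<in> sets lborel"
    by (rule AE_E)
  then have "N \<in> null_sets lborel" by (simp add: null_setsI)
  then have "{0<..<1} \<subseteq> closure ({0<..<1} - N)"
    by (rule open_subset_closure_diff_null_set[OF open_greaterThanLessThan])
  then show "(\<lambda>n. H_end (us n) u) \<longlonglongrightarrow> 0"
    by (rule tendsto_H_end_if_dense_tendsto_H_cut[OF u us Diff_subset]) (use bad in auto)
qed

theorem theorem4p6:
  fixes u :: "'a::metric_space \<Rightarrow> real" and us :: "nat \<Rightarrow> 'a \<Rightarrow> real"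
  assumes "F_USCG u" and "\<And>n. F_USCG (us n)"
  shows "(((\<lambda>n. H_end (us n) u) \<longlonglongrightarrow> 0)
           \<longleftrightarrow> (AE \<alpha> in lborel. \<alpha> \<in> {0<..<1} \<longrightarrow>
                   ((\<lambda>n. H (cut (us n) \<alpha>) (cut u \<alpha>)) \<longlonglongrightarrow> 0)))
       \<and> (((\<lambda>n. H_end (us n) u) \<longlonglongrightarrow> 0)
           \<longleftrightarrow> (\<forall>\<alpha>\<in>{0<..<1} - platform_points u.
                   ((\<lambda>n. H (cut (us n) \<alpha>) (cut u \<alpha>)) \<longlonglongrightarrow> 0)))
       \<and> (((\<lambda>n. H_end (us n) u) \<longlonglongrightarrow> 0)
           \<longleftrightarrow> (\<exists>P. P \<subseteq> {0<..<1} - platform_points u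
                   \<and> {0<..<1} - platform_points u \<subseteq> closure P
                   \<and> (\<forall>\<alpha>\<in>P. ((\<lambda>n. H (cut (us n) \<alpha>) (cut u \<alpha>)) \<longlonglongrightarrow> 0))))
       \<and> (((\<lambda>n. H_end (us n) u) \<longlonglongrightarrow> 0)
           \<longleftrightarrow> (\<exists>P. countable P \<and> P \<subseteq> {0<..<1} - platform_points u
                   \<and> {0<..<1} - platform_points u \<subseteq> closure P
                   \<and> (\<forall>\<alpha>\<in>P. ((\<lambda>n. H (cut (us n) \<alpha>) (cut u \<alpha>)) \<longlonglongrightarrow> 0))))"
proof -
  let ?conv = "(\<lambda>n. H_end (us n) u) \<longlonglongrightarrow> 0"
  let ?conv_at = "\<lambda>\<alpha>. (\<lambda>n. H (cut (us n) \<alpha>) (cut u \<alpha>)) \<longlonglongrightarrow> 0"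
  let ?S = "{0<..<1} - platform_points u"
  have necessary: "?conv_at \<alpha>" if ?conv "\<alpha> \<in> ?S" for \<alpha>
    using tendsto_H_cut_if_tendsto_H_end[OF assms that] .
  have sufficient: ?conv if "P \<subseteq> ?S" "?S \<subseteq> closure P" "\<forall>\<alpha>\<in>P. ?conv_at \<alpha>" for P
    by (rule tendsto_H_end_if_dense_nonplatform_tendsto_H_cut[OF assms(1,2) that(1,2)]) (use that(3) in blast)
  obtain T where T: "countable T" "T \<subseteq> ?S" "?S \<subseteq> closure T" by (rule separable)
  have "?conv \<longleftrightarrow> (\<forall>\<alpha>\<in>?S. ?conv_at \<alpha>)"
    using necessary sufficient[OF subset_refl closure_subset] by blast
  moreover have "?conv \<longleftrightarrow> (\<exists>P. P \<subseteq> ?S \<and> ?S \<subseteq> closure P \<and> (\<forall>\<alpha>\<in>P. ?conv_at \<alpha>))"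
  proof
    assume ?conv
    then show "\<exists>P. P \<subseteq> ?S \<and> ?S \<subseteq> closure P \<and> (\<forall>\<alpha>\<in>P. ?conv_at \<alpha>)"
      using T(2,3) necessary by (intro exI[of _ T]) blast
  qed (use sufficient in blast)
  moreover have "?conv \<longleftrightarrow> (\<exists>P. countable P \<and> P \<subseteq> ?S \<and> ?S \<subseteq> closure P \<and> (\<forall>\<alpha>\<in>P. ?conv_at \<alpha>))"
  proof
    assume ?conv
    then show "\<exists>P. countable P \<and> P \<subseteq> ?S \<and> ?S \<subseteq> closure P \<and> (\<forall>\<alpha>\<in>P. ?conv_at \<alpha>)"
      using T necessary by (intro exI[of _ T]) blast
  qed (use sufficient in blast)
  ultimately show ?thesis
    using tendsto_H_end_iff_AE_tendsto_H_cut[OF assms] by (intro conjI)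
qed

end
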